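(* Let $X$ be a two-sided quaternionic Banach space, $T\in\mathcal{B}(X)$ and $n$ a positive integer. Then for every $s\in\mathbb{H}$ with $|s|>r_S(T)$, the series below converges in operator norm and $$S_L^{-n}(s,T)=\sum_{m=0}^{\infty}\binom{m+n-1}{n-1}T^m s^{-(m+n)},$$ where $S_L^{-n}(s,T)=Q_s(T)^{-n}\sum_{m=0}^{n}\binom{n}{m}(-T)^m\overline{s}^{\,n-m}$.
   Context: $\mathbb{H}$ denotes the real algebra of quaternions; for $s\in\mathbb{H}$, $\overline{s}$ is its conjugate, $\mathrm{Re}(s)$ its real part and $|s|$ its modulus. $X$ is a two-sided vector space over $\mathbb{H}$ which is a Banach space; $\mathcal{B}(X)$ is the algebra of bounded right $\mathbb{H}$-linear operators on $X$, with identity $\mathcal{I}$ and operator norm; for operators and quaternions, $(sT)(v)=s(Tv)$ and $(Ts)(v)=T(sv)$. For $s\in\mathbb{H}$ put $Q_s(T)=T^2-2\mathrm{Re}(s)T+|s|^2\mathcal{I}$. The $S$-resolvent set is $\rho_S(T)=\{s\in\mathbb{H}: Q_s(T)\text{ invertible in }\mathcal{B}(X)\}$, the $S$-spectrum is $\sigma_S(T)=\mathbb{H}\setminus\rho_S(T)$, and the $S$-spectral radius is $r_S(T)=\sup\{|s|: s\in\sigma_S(T)\}$ (so every $s$ with $|s|>r_S(T)$ lies in $\rho_S(T)$). *)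

theory Defs
  imports "HOL-Analysis.Analysis"
begin

codatatype quat = Quat (qRe: real) (qIm1: real) (qIm2: real) (qIm3: real)

lemma quat_eq_iff: "x = y \<longleftrightarrow> qRe x = qRe y \<and> qIm1 x = qIm1 y \<and> qIm2 x = qIm2 y \<and> qIm3 x = qIm3 y"
  by (auto intro: quat.expand)

lemmas quat_eqI = quat.expand

instantiation quat :: real_vector
begin
primcorec zero_quat where "qRe 0 = 0" | "qIm1 0 = 0" | "qIm2 0 = 0" | "qIm3 0 = 0"
primcorec plus_quat where
  "qRe (x + y) = qRe x + qRe y" | "qIm1 (x + y) = qIm1 x + qIm1 y"
| "qIm2 (x + y) = qIm2 x + qIm2 y" | "qIm3 (x + y) = qIm3 x + qIm3 y"
primcorec uminus_quat where
  "qRe (- x) = - qRe x" | "qIm1 (- x) = - qIm1 x" | "qIm2 (- x) = - qIm2 x" | "qIm3 (- x) = - qIm3 x"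
primcorec minus_quat where
  "qRe (x - y) = qRe x - qRe y" | "qIm1 (x - y) = qIm1 x - qIm1 y"
| "qIm2 (x - y) = qIm2 x - qIm2 y" | "qIm3 (x - y) = qIm3 x - qIm3 y"
primcorec scaleR_quat where
  "qRe (scaleR r x) = r * qRe x" | "qIm1 (scaleR r x) = r * qIm1 x"
| "qIm2 (scaleR r x) = r * qIm2 x" | "qIm3 (scaleR r x) = r * qIm3 x"
instance by standard (auto intro!: quat_eqI simp: algebra_simps)
end

instantiation quat :: "{real_algebra_1, inverse}"
begin
primcorec one_quat where "qRe 1 = 1" | "qIm1 1 = 0" | "qIm2 1 = 0" | "qIm3 1 = 0"
primcorec times_quat where
  "qRe (a * b) = qRe a * qRe b - qIm1 a * qIm1 b - qIm2 a * qIm2 b - qIm3 a * qIm3 b"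
| "qIm1 (a * b) = qRe a * qIm1 b + qIm1 a * qRe b + qIm2 a * qIm3 b - qIm3 a * qIm2 b"
| "qIm2 (a * b) = qRe a * qIm2 b - qIm1 a * qIm3 b + qIm2 a * qRe b + qIm3 a * qIm1 b"
| "qIm3 (a * b) = qRe a * qIm3 b + qIm1 a * qIm2 b - qIm2 a * qIm1 b + qIm3 a * qRe b"
primcorec inverse_quat where
  "qRe (inverse a) = qRe a / ((qRe a)\<^sup>2 + (qIm1 a)\<^sup>2 + (qIm2 a)\<^sup>2 + (qIm3 a)\<^sup>2)"
| "qIm1 (inverse a) = - qIm1 a / ((qRe a)\<^sup>2 + (qIm1 a)\<^sup>2 + (qIm2 a)\<^sup>2 + (qIm3 a)\<^sup>2)"
| "qIm2 (inverse a) = - qIm2 a / ((qRe a)\<^sup>2 + (qIm1 a)\<^sup>2 + (qIm2 a)\<^sup>2 + (qIm3 a)\<^sup>2)"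
| "qIm3 (inverse a) = - qIm3 a / ((qRe a)\<^sup>2 + (qIm1 a)\<^sup>2 + (qIm2 a)\<^sup>2 + (qIm3 a)\<^sup>2)"
definition divide_quat :: "quat \<Rightarrow> quat \<Rightarrow> quat" where "divide_quat x y = x * inverse y"
instance by standard (auto intro!: quat_eqI simp: algebra_simps quat_eq_iff)
end

instantiation quat :: real_normed_vector
begin
definition "norm_quat z = sqrt ((qRe z)\<^sup>2 + (qIm1 z)\<^sup>2 + (qIm2 z)\<^sup>2 + (qIm3 z)\<^sup>2)"
definition "sgn_quat (x :: quat) = scaleR (inverse (norm x)) x"
definition "dist_quat (x :: quat) y = norm (x - y)"
definition [code del]: "(uniformity :: (quat \<times> quat) filter) = (INF e\<in>{0 <..}. principal {(x, y). dist x y < e})"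
definition [code del]: "open (U :: quat set) \<longleftrightarrow> (\<forall>x\<in>U. eventually (\<lambda>(x', y). x' = x \<longrightarrow> y \<in> U) uniformity)"
instance
proof
  fix r :: real and x y :: quat
  show "norm x = 0 \<longleftrightarrow> x = 0"
    by (auto simp: norm_quat_def quat_eq_iff add_nonneg_eq_0_iff)
  have e: "norm z = norm (qRe z, qIm1 z, qIm2 z, qIm3 z)" for z :: quat
    by (simp add: norm_quat_def norm_Pair add.assoc)
  have "(qRe (x+y), qIm1 (x+y), qIm2 (x+y), qIm3 (x+y)) = (qRe x, qIm1 x, qIm2 x, qIm3 x) + (qRe y, qIm1 y, qIm2 y, qIm3 y)"
    by simp
  then show "norm (x + y) \<le> norm x + norm y"
    unfolding e by (metis norm_triangle_ineq)
  show "norm (scaleR r x) = \<bar>r\<bar> * norm x"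
    by (simp add: norm_quat_def power_mult_distrib distrib_left[symmetric] real_sqrt_mult)
qed (rule sgn_quat_def dist_quat_def open_quat_def uniformity_quat_def)+
end


primcorec cnj_quat :: "quat \<Rightarrow> quat" where
  "qRe (cnj_quat a) = qRe a" | "qIm1 (cnj_quat a) = - qIm1 a"
| "qIm2 (cnj_quat a) = - qIm2 a" | "qIm3 (cnj_quat a) = - qIm3 a"

definition two_sided_qbanach :: "(quat \<Rightarrow> 'a \<Rightarrow> 'a) \<Rightarrow> ('a::banach \<Rightarrow> quat \<Rightarrow> 'a) \<Rightarrow> bool" where
  "two_sided_qbanach ql qr \<longleftrightarrow>
     (\<forall>s t v. ql (s + t) v = ql s v + ql t v) \<and>
     (\<forall>s v w. ql s (v + w) = ql s v + ql s w) \<and>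
     (\<forall>s t v. ql (s * t) v = ql s (ql t v)) \<and>
     (\<forall>v. ql 1 v = v) \<and>
     (\<forall>s t v. qr v (s + t) = qr v s + qr v t) \<and>
     (\<forall>s v w. qr (v + w) s = qr v s + qr w s) \<and>
     (\<forall>s t v. qr v (s * t) = qr (qr v s) t) \<and>
     (\<forall>v. qr v 1 = v) \<and>
     (\<forall>s t v. ql s (qr v t) = qr (ql s v) t) \<and>
     (\<forall>r v. ql (of_real r) v = r *\<^sub>R v \<and> qr v (of_real r) = r *\<^sub>R v) \<and>
     (\<forall>s v. norm (ql s v) = norm s * norm v \<and> norm (qr v s) = norm s * norm v)"

text \<open>Membership in B(X): bounded right H-linear operators.\<close>
definition right_linear :: "('a \<Rightarrow> quat \<Rightarrow> 'a) \<Rightarrow> ('a::real_normed_vector \<Rightarrow>\<^sub>L 'a) \<Rightarrow> bool" where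
  "right_linear qr T \<longleftrightarrow> (\<forall>v q. blinfun_apply T (qr v q) = qr (blinfun_apply T v) q)"

definition lmul :: "(quat \<Rightarrow> 'a \<Rightarrow> 'a) \<Rightarrow> quat \<Rightarrow> ('a::real_normed_vector \<Rightarrow>\<^sub>L 'a)" where
  "lmul ql s = Blinfun (ql s)"

definition bpow :: "('a::real_normed_vector \<Rightarrow>\<^sub>L 'a) \<Rightarrow> nat \<Rightarrow> ('a \<Rightarrow>\<^sub>L 'a)" where
  "bpow T m = ((\<lambda>S. T o\<^sub>L S) ^^ m) id_blinfun"

definition Qop :: "quat \<Rightarrow> ('a::real_normed_vector \<Rightarrow>\<^sub>L 'a) \<Rightarrow> ('a \<Rightarrow>\<^sub>L 'a)" where
  "Qop s T = bpow T 2 - (2 * qRe s) *\<^sub>R T + (norm s)\<^sup>2 *\<^sub>R id_blinfun"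

definition invertible_B :: "('a \<Rightarrow> quat \<Rightarrow> 'a) \<Rightarrow> ('a::real_normed_vector \<Rightarrow>\<^sub>L 'a) \<Rightarrow> bool" where
  "invertible_B qr A \<longleftrightarrow> (\<exists>S. right_linear qr S \<and> S o\<^sub>L A = id_blinfun \<and> A o\<^sub>L S = id_blinfun)"

definition binv :: "('a::real_normed_vector \<Rightarrow>\<^sub>L 'a) \<Rightarrow> ('a \<Rightarrow>\<^sub>L 'a)" where
  "binv A = (THE S. S o\<^sub>L A = id_blinfun \<and> A o\<^sub>L S = id_blinfun)"

definition S_resolvent :: "('a \<Rightarrow> quat \<Rightarrow> 'a) \<Rightarrow> ('a::real_normed_vector \<Rightarrow>\<^sub>L 'a) \<Rightarrow> quat set" where
  "S_resolvent qr T = {s. invertible_B qr (Qop s T)}"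

definition S_spectrum :: "('a \<Rightarrow> quat \<Rightarrow> 'a) \<Rightarrow> ('a::real_normed_vector \<Rightarrow>\<^sub>L 'a) \<Rightarrow> quat set" where
  "S_spectrum qr T = UNIV - S_resolvent qr T"

definition S_radius :: "('a \<Rightarrow> quat \<Rightarrow> 'a) \<Rightarrow> ('a::real_normed_vector \<Rightarrow>\<^sub>L 'a) \<Rightarrow> real" where
  "S_radius qr T = Sup (norm ` S_spectrum qr T)"

definition SL_neg :: "(quat \<Rightarrow> 'a \<Rightarrow> 'a) \<Rightarrow> nat \<Rightarrow> quat \<Rightarrow> ('a::real_normed_vector \<Rightarrow>\<^sub>L 'a) \<Rightarrow> ('a \<Rightarrow>\<^sub>L 'a)" where
  "SL_neg ql n s T = bpow (binv (Qop s T)) n o\<^sub>L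
     (\<Sum>m\<le>n. real (n choose m) *\<^sub>R (bpow (- T) m o\<^sub>L lmul ql (cnj_quat s ^ (n - m))))"

end

theory Submission
  imports Defs "HOL-Analysis.Generalised_Binomial_Theorem"
begin

text \<open>Right multiplication by the complex slice of the quaternions is a contractive complex
  structure on \<open>X\<close> commuting with every right linear \<open>T\<close>, and on that slice \<open>Q\<^sub>w(T)\<close> factors
  as \<open>(T - w)(T - cnj w)\<close>. So \<open>T - w\<close> is invertible for complex \<open>|w| > r\<^sub>S(T)\<close>, and Rickart's
  elementary proof of the spectral radius formula (averaging resolvents over roots of unity)
  yields \<open>r\<^sup>k \<parallel>T\<^sup>k\<parallel> \<longrightarrow> 0\<close> for some \<open>r > 1/|s|\<close>; the same argument shows that the S-spectrum of a
  nonzero space is nonempty, so that \<open>r\<^sub>S(T)\<close> is a genuine supremum. Hence the series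
  \<open>S\<^sub>n = \<Sum>\<^sub>m C(m+n-1,n-1) T\<^sup>m s\<^sup>-\<^sup>m\<^sup>-\<^sup>n\<close> converge, satisfy \<open>S\<^sub>n\<^sub>+\<^sub>1 s - T S\<^sub>n\<^sub>+\<^sub>1 = S\<^sub>n\<close>, and induction
  on \<open>n\<close> gives \<open>Q\<^sub>s(T)\<^sup>n S\<^sub>n = \<Sum>\<^sub>m C(n,m) (-T)\<^sup>m (cnj s)\<^sup>n\<^sup>-\<^sup>m\<close>.\<close>

section \<open>Bounded operators on a real Banach space\<close>

interpretation blinfun_compose: bounded_bilinear blinfun_compose
  by (rule bounded_bilinear_blinfun_compose)

lemmas blinfun_compose_simps =
  blinfun_compose.add_left blinfun_compose.add_right
  blinfun_compose.diff_left blinfun_compose.diff_right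
  blinfun_compose.minus_left blinfun_compose.minus_right
  blinfun_compose.scaleR_left blinfun_compose.scaleR_right

lemma blinfun_compose_assoc: "(A o\<^sub>L B) o\<^sub>L C = A o\<^sub>L (B o\<^sub>L C)"
  by (rule blinfun_eqI) simp

lemma id_blinfun_compose [simp]: "id_blinfun o\<^sub>L A = A"
  by (rule blinfun_eqI) simp

lemma blinfun_compose_id [simp]: "A o\<^sub>L id_blinfun = A"
  by (rule blinfun_eqI) simp

lemma sums_zero_space:
  fixes f :: "nat \<Rightarrow> 'a::real_normed_vector \<Rightarrow>\<^sub>L 'b::real_normed_vector"
  assumes "\<And>v::'a. v = 0"
  shows "f sums B"
proof -
  have zero: "C = 0" for C :: "'a \<Rightarrow>\<^sub>L 'b"
  proof (rule blinfun_eqI)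
    show "blinfun_apply C v = blinfun_apply 0 v" for v
      using assms[of v] by (simp add: blinfun.zero_right)
  qed
  have "f = (\<lambda>_. 0)" "B = 0"
    by (rule ext, rule zero, rule zero)
  then show ?thesis
    by simp
qed

lemma bpow_0 [simp]: "bpow A 0 = id_blinfun"
  by (simp add: bpow_def)

lemma bpow_Suc: "bpow A (Suc m) = A o\<^sub>L bpow A m"
  by (simp add: bpow_def)

lemma bpow_add: "bpow A (m + k) = bpow A m o\<^sub>L bpow A k"
  by (induction m) (simp_all add: bpow_Suc blinfun_compose_assoc)

lemma bpow_Suc_right: "bpow A (Suc m) = bpow A m o\<^sub>L A"
  using bpow_add[of A m 1] by (simp add: bpow_Suc)

lemma bpow_commute: "A o\<^sub>L B = B o\<^sub>L A \<Longrightarrow> A o\<^sub>L bpow B m = bpow B m o\<^sub>L A"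
  by (induction m) (simp_all add: bpow_Suc flip: blinfun_compose_assoc, simp add: blinfun_compose_assoc)

lemma bpow_scaleR: "bpow (c *\<^sub>R A) m = c ^ m *\<^sub>R bpow A m"
  by (induction m) (simp_all add: bpow_Suc blinfun_compose_simps)

lemma bpow_uminus: "bpow (- A) m = (-1) ^ m *\<^sub>R bpow A m"
  using bpow_scaleR[of "-1" A m] by simp

lemma norm_bpow_le: "norm (bpow A m) \<le> norm A ^ m"
proof (induction m)
  case 0
  show ?case by (simp add: norm_blinfun_id_le)
next
  case (Suc m)
  have "norm (bpow A (Suc m)) \<le> norm A * norm (bpow A m)"
    by (simp add: bpow_Suc norm_blinfun_compose)
  also have "\<dots> \<le> norm A * norm A ^ m"
    using Suc by (simp add: mult_left_mono)
  finally show ?case by simp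
qed

lemma bpow_geometric_sum:
  "(\<Sum>m<k. bpow A m) o\<^sub>L (id_blinfun - A) = id_blinfun - bpow A k"
  "(id_blinfun - A) o\<^sub>L (\<Sum>m<k. bpow A m) = id_blinfun - bpow A k"
proof -
  have "bpow A m o\<^sub>L A = bpow A (Suc m)" "A o\<^sub>L bpow A m = bpow A (Suc m)" for m
    by (rule bpow_Suc_right[symmetric], rule bpow_Suc[symmetric])
  then show "(\<Sum>m<k. bpow A m) o\<^sub>L (id_blinfun - A) = id_blinfun - bpow A k"
    "(id_blinfun - A) o\<^sub>L (\<Sum>m<k. bpow A m) = id_blinfun - bpow A k"
    by (simp_all add: blinfun_compose.sum_left blinfun_compose.sum_right blinfun_compose_simps
        sum_lessThan_telescope' flip: sum_subtractf)
qed

definition two_sided_inverse :: "('a::real_normed_vector \<Rightarrow>\<^sub>L 'a) \<Rightarrow> ('a \<Rightarrow>\<^sub>L 'a) \<Rightarrow> bool" where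
  "two_sided_inverse A B \<longleftrightarrow> B o\<^sub>L A = id_blinfun \<and> A o\<^sub>L B = id_blinfun"

definition invertible_blinfun :: "('a::real_normed_vector \<Rightarrow>\<^sub>L 'a) \<Rightarrow> bool" where
  "invertible_blinfun A \<longleftrightarrow> (\<exists>B. two_sided_inverse A B)"

lemma two_sided_inverse_sym: "two_sided_inverse A B \<Longrightarrow> two_sided_inverse B A"
  by (simp add: two_sided_inverse_def)

lemma two_sided_inverse_id: "two_sided_inverse id_blinfun id_blinfun"
  by (simp add: two_sided_inverse_def)

lemma two_sided_inverse_compose:
  "two_sided_inverse A B \<Longrightarrow> two_sided_inverse C D \<Longrightarrow> two_sided_inverse (A o\<^sub>L C) (D o\<^sub>L B)"
  unfolding two_sided_inverse_def by (metis blinfun_compose_assoc id_blinfun_compose)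

lemma two_sided_inverse_uminus: "two_sided_inverse A B \<Longrightarrow> two_sided_inverse (- A) (- B)"
  by (simp add: two_sided_inverse_def blinfun_compose_simps)

lemma two_sided_inverse_scaleR:
  "two_sided_inverse A B \<Longrightarrow> c \<noteq> 0 \<Longrightarrow> two_sided_inverse (c *\<^sub>R A) (inverse c *\<^sub>R B)"
  by (simp add: two_sided_inverse_def blinfun_compose_simps)

lemma two_sided_inverse_bpow: "two_sided_inverse A B \<Longrightarrow> two_sided_inverse (bpow A n) (bpow B n)"
proof (induction n)
  case (Suc n)
  then show ?case
    unfolding bpow_Suc[of A] bpow_Suc_right[of B] by (simp add: two_sided_inverse_compose)
qed (simp add: two_sided_inverse_id)

lemma two_sided_inverse_commute:
  "two_sided_inverse A B \<Longrightarrow> A o\<^sub>L C = C o\<^sub>L A \<Longrightarrow> B o\<^sub>L C = C o\<^sub>L B"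
  unfolding two_sided_inverse_def by (metis blinfun_compose_assoc id_blinfun_compose blinfun_compose_id)

lemma binv_eqI: "two_sided_inverse A B \<Longrightarrow> binv A = B"
  unfolding binv_def two_sided_inverse_def
  by (rule the_equality) (auto, metis blinfun_compose_assoc blinfun_compose_id)

lemma two_sided_inverse_of_commuting_factor:
  assumes "Q = X o\<^sub>L Y" "Q = Y o\<^sub>L X" "two_sided_inverse Q W"
  shows "two_sided_inverse X (Y o\<^sub>L W)"
proof -
  have "(W o\<^sub>L Y) o\<^sub>L X = id_blinfun" "X o\<^sub>L (Y o\<^sub>L W) = id_blinfun"
    using assms by (auto simp: two_sided_inverse_def blinfun_compose_assoc)
  then show ?thesis
    unfolding two_sided_inverse_def by (metis blinfun_compose_assoc id_blinfun_compose blinfun_compose_id)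
qed

lemma two_sided_inverse_diff:
  "two_sided_inverse A F \<Longrightarrow> two_sided_inverse B G \<Longrightarrow> F - G = F o\<^sub>L (B - A) o\<^sub>L G"
  by (simp add: two_sided_inverse_def blinfun_compose_simps blinfun_compose_assoc)

lemma norm_blinfun_compose3: "norm (A o\<^sub>L B o\<^sub>L C) \<le> norm A * norm B * norm C"
  by (rule order_trans[OF norm_blinfun_compose mult_right_mono[OF norm_blinfun_compose norm_ge_zero]])

lemma norm_two_sided_inverse_diff_le:
  assumes F: "two_sided_inverse A F" and G: "two_sided_inverse B G"
    and small: "norm (B - A) * norm F \<le> 1/2"
  shows "norm (G - F) \<le> 2 * (norm F)\<^sup>2 * norm (B - A)"
proof -
  have GF: "norm (G - F) \<le> norm G * (norm (B - A) * norm F)"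
    using norm_blinfun_compose3[of G "A - B" F]
    by (simp add: two_sided_inverse_diff[OF G F] norm_minus_commute mult.assoc)
  have "norm G \<le> norm F + norm (G - F)"
    using norm_triangle_ineq[of F "G - F"] by simp
  also have "\<dots> \<le> norm F + norm G * (1/2)"
    using GF mult_left_mono[OF small, of "norm G"] by simp
  finally have "norm G \<le> 2 * norm F" by simp
  then have "norm G * (norm (B - A) * norm F) \<le> 2 * norm F * (norm (B - A) * norm F)"
    by (rule mult_right_mono) simp
  with GF show ?thesis
    by (simp add: power2_eq_square mult_ac)
qed

lemma norm_inverse_sub_id_le:
  assumes "two_sided_inverse B G" "norm (B - id_blinfun) \<le> 1/2"
  shows "norm (G - id_blinfun) \<le> 2 * norm (B - id_blinfun)"
proof -
  have id: "norm (id_blinfun :: 'a \<Rightarrow>\<^sub>L 'a) \<le> 1"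
    by (rule norm_blinfun_id_le)
  have "norm (B - id_blinfun) * norm (id_blinfun :: 'a \<Rightarrow>\<^sub>L 'a) \<le> 1/2"
    using assms(2) mult_left_mono[OF id, of "norm (B - id_blinfun)"] by simp
  then have "norm (G - id_blinfun) \<le> 2 * (norm (id_blinfun :: 'a \<Rightarrow>\<^sub>L 'a))\<^sup>2 * norm (B - id_blinfun)"
    by (rule norm_two_sided_inverse_diff_le[OF two_sided_inverse_id assms(1)])
  also have "\<dots> \<le> 2 * 1 * norm (B - id_blinfun)"
    using id by (intro mult_right_mono mult_left_mono) (simp_all add: power_le_one)
  finally show ?thesis by simp
qed

lemma continuous_on_two_sided_inverse:
  fixes X F :: "'b::metric_space \<Rightarrow> ('a::real_normed_vector \<Rightarrow>\<^sub>L 'a)"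
  assumes cont: "continuous_on S X" and inv: "\<And>x. x \<in> S \<Longrightarrow> two_sided_inverse (X x) (F x)"
  shows "continuous_on S F"
  unfolding continuous_on_def
proof
  fix y assume y: "y \<in> S"
  have X: "((\<lambda>x. norm (X x - X y)) \<longlongrightarrow> 0) (at y within S)"
    using cont y by (simp add: continuous_on_def tendsto_norm_zero LIM_zero)
  have "\<forall>\<^sub>F x in at y within S. norm (X x - X y) * norm (F y) < 1/2"
    using order_tendstoD(2)[OF tendsto_mult_left_zero[OF X], of "1/2" "norm (F y)"] by simp
  moreover have "\<forall>\<^sub>F x in at y within S. x \<in> S"
    by (simp add: eventually_at_filter)
  ultimately have "\<forall>\<^sub>F x in at y within S. norm (F x - F y) \<le> 2 * (norm (F y))\<^sup>2 * norm (X x - X y)"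
    by eventually_elim (simp add: norm_two_sided_inverse_diff_le inv y)
  then have "((\<lambda>x. F x - F y) \<longlongrightarrow> 0) (at y within S)"
    by (rule Lim_null_comparison) (intro tendsto_mult_right_zero X)
  then show "(F \<longlongrightarrow> F y) (at y within S)"
    by (rule LIM_zero_cancel)
qed

lemma lipschitz_on_two_sided_inverse:
  fixes X F :: "'b::metric_space \<Rightarrow> ('a::real_normed_vector \<Rightarrow>\<^sub>L 'a)"
  assumes S: "compact S" and X: "L-lipschitz_on S X"
    and inv: "\<And>x. x \<in> S \<Longrightarrow> two_sided_inverse (X x) (F x)"
  obtains M where "M-lipschitz_on S F"
proof -
  have "continuous_on S F"
    using lipschitz_on_continuous_on[OF X] inv by (rule continuous_on_two_sided_inverse)
  then have "bounded (F ` S)"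
    using S by (intro compact_imp_bounded compact_continuous_image)
  then obtain K where K: "K > 0" "\<And>x. x \<in> S \<Longrightarrow> norm (F x) \<le> K"
    unfolding bounded_pos by blast
  have "(K * L * K)-lipschitz_on S F"
  proof (rule lipschitz_onI)
    fix x y assume xy: "x \<in> S" "y \<in> S"
    have "dist (F x) (F y) \<le> norm (F x) * norm (X y - X x) * norm (F y)"
      unfolding dist_norm two_sided_inverse_diff[OF inv[OF xy(1)] inv[OF xy(2)]]
      by (rule norm_blinfun_compose3)
    also have "\<dots> \<le> K * (L * dist x y) * K"
      using K xy lipschitz_onD[OF X xy(2,1)] lipschitz_on_nonneg[OF X]
      by (intro mult_mono) (auto simp: dist_norm dist_commute)
    finally show "dist (F x) (F y) \<le> K * L * K * dist x y"
      by (simp add: mult_ac)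
  qed (use K lipschitz_on_nonneg[OF X] in simp)
  then show ?thesis by (rule that)
qed

lemma invertible_id_minus:
  fixes A :: "'a::banach \<Rightarrow>\<^sub>L 'a"
  assumes "norm A < 1"
  shows "invertible_blinfun (id_blinfun - A)"
proof -
  have "summable (\<lambda>k. norm A ^ k)"
    using assms by (intro summable_geometric) simp
  then have sums: "bpow A sums suminf (bpow A)"
    by (intro summable_sums summable_comparison_test'[OF _ norm_bpow_le])
  have "bpow A \<longlonglongrightarrow> 0"
  proof (rule Lim_null_comparison)
    show "\<forall>\<^sub>F k in sequentially. norm (bpow A k) \<le> norm A ^ k"
      by (simp add: norm_bpow_le)
    show "(\<lambda>k. norm A ^ k) \<longlonglongrightarrow> 0"
      using assms by (intro LIMSEQ_power_zero) simp
  qed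
  from sums_minus[OF telescope_sums[OF this]]
  have telescope: "(\<lambda>k. bpow A k - bpow A (Suc k)) sums id_blinfun"
    by simp
  have "(\<lambda>k. (id_blinfun - A) o\<^sub>L bpow A k) sums ((id_blinfun - A) o\<^sub>L suminf (bpow A))"
    by (rule bounded_linear.sums[OF blinfun_compose.bounded_linear_right sums])
  then have right: "(id_blinfun - A) o\<^sub>L suminf (bpow A) = id_blinfun"
    by (rule sums_unique2) (use telescope in \<open>simp add: blinfun_compose_simps bpow_Suc\<close>)
  have "(\<lambda>k. bpow A k o\<^sub>L (id_blinfun - A)) sums (suminf (bpow A) o\<^sub>L (id_blinfun - A))"
    by (rule bounded_linear.sums[OF blinfun_compose.bounded_linear_left sums])
  then have left: "suminf (bpow A) o\<^sub>L (id_blinfun - A) = id_blinfun"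
    by (rule sums_unique2) (simp add: blinfun_compose_simps flip: bpow_Suc_right, rule telescope)
  from left right show ?thesis
    unfolding invertible_blinfun_def two_sided_inverse_def by blast
qed

lemma power_mult_tendsto_zero_below:
  fixes a :: "nat \<Rightarrow> real"
  assumes bound: "\<forall>\<^sub>F k in sequentially. \<rho> ^ k * a k \<le> C"
    and a: "\<And>k. 0 \<le> a k" and t: "0 \<le> t" "t < \<rho>"
  shows "(\<lambda>k. t ^ k * a k) \<longlonglongrightarrow> 0"
proof (rule Lim_null_comparison)
  have \<rho>: "\<rho> > 0" using t by simp
  show "\<forall>\<^sub>F k in sequentially. norm (t ^ k * a k) \<le> (t / \<rho>) ^ k * C"
    using bound
  proof eventually_elim
    case (elim k)
    have "norm (t ^ k * a k) = (t / \<rho>) ^ k * (\<rho> ^ k * a k)"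
      using \<rho> t a[of k] by (simp add: power_divide)
    also have "\<dots> \<le> (t / \<rho>) ^ k * C"
      using elim \<rho> t by (intro mult_left_mono) auto
    finally show ?case .
  qed
  show "(\<lambda>k. (t / \<rho>) ^ k * C) \<longlonglongrightarrow> 0"
    using \<rho> t by (intro tendsto_mult_left_zero LIMSEQ_power_zero) simp
qed

section \<open>Rickart's spectral radius argument\<close>

definition root_unity :: "nat \<Rightarrow> complex" where
  "root_unity k = exp (2 * of_real pi * \<i> / of_nat k)"

lemma norm_root_unity [simp]: "cmod (root_unity k) = 1"
  by (simp add: root_unity_def norm_exp_eq_Re)

lemma root_unity_power_eq_1_iff: "0 < k \<Longrightarrow> root_unity k ^ m = 1 \<longleftrightarrow> k dvd m"
  using complex_root_unity_eq_1[of k m]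
  by (simp add: root_unity_def mult_ac flip: exp_of_nat_mult)

lemma sum_powers_root_unity:
  assumes "0 < m" "m < k"
  shows "(\<Sum>j<k. (root_unity k ^ m) ^ j) = 0"
proof -
  have "root_unity k ^ m \<noteq> 1"
    using assms by (simp add: root_unity_power_eq_1_iff nat_dvd_not_less)
  moreover have "(root_unity k ^ m) ^ k = 1"
    using assms by (simp add: root_unity_power_eq_1_iff flip: power_mult)
  ultimately show ?thesis
    by (simp add: sum_gp_strict)
qed

locale complex_action =
  fixes J :: "complex \<Rightarrow> ('a::banach \<Rightarrow>\<^sub>L 'a)"
  assumes J_mult: "J (z * w) = J z o\<^sub>L J w"
    and J_add: "J (z + w) = J z + J w"
    and J_of_real: "J (of_real r) = r *\<^sub>R id_blinfun"
    and norm_J_le: "norm (J z) \<le> cmod z"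
begin

lemma J_diff: "J (z - w) = J z - J w"
  using J_add[of "z - w" w] by simp

lemma J_0: "J 0 = 0"
  using J_of_real[of 0] by simp

lemma J_1: "J 1 = id_blinfun"
  using J_of_real[of 1] by simp

lemma J_of_nat: "J (of_nat k) = real k *\<^sub>R id_blinfun"
  using J_of_real[of "real k"] by simp

lemma J_sum: "J (\<Sum>i\<in>I. f i) = (\<Sum>i\<in>I. J (f i))"
  by (induction I rule: infinite_finite_induct) (simp_all add: J_0 J_add)

lemma J_commute: "J z o\<^sub>L J w = J w o\<^sub>L J z"
  by (metis J_mult mult.commute)

lemma bpow_J_compose:
  assumes "\<And>z. A o\<^sub>L J z = J z o\<^sub>L A"
  shows "bpow (J c o\<^sub>L A) m = J (c ^ m) o\<^sub>L bpow A m"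
proof (induction m)
  case 0
  show ?case by (simp add: J_1)
next
  case (Suc m)
  have "A o\<^sub>L (J (c ^ m) o\<^sub>L bpow A m) = J (c ^ m) o\<^sub>L (A o\<^sub>L bpow A m)"
    by (simp add: assms flip: blinfun_compose_assoc)
  with Suc show ?case
    by (simp add: bpow_Suc blinfun_compose_assoc J_mult)
qed

lemma invertible_id_minus_J_compose:
  assumes "\<mu> \<noteq> 0 \<Longrightarrow> invertible_blinfun (A - J (inverse \<mu>))"
  shows "invertible_blinfun (id_blinfun - (J \<mu> o\<^sub>L A))"
proof (cases "\<mu> = 0")
  case True
  then show ?thesis
    using two_sided_inverse_id by (auto simp: J_0 invertible_blinfun_def)
next
  case False
  then obtain B where B: "two_sided_inverse (A - J (inverse \<mu>)) B"
    using assms by (auto simp: invertible_blinfun_def)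
  have "two_sided_inverse (J \<mu>) (J (inverse \<mu>))"
    using False by (simp add: two_sided_inverse_def J_1 flip: J_mult)
  from two_sided_inverse_compose[OF this two_sided_inverse_uminus[OF B]]
  have "two_sided_inverse (J \<mu> o\<^sub>L - (A - J (inverse \<mu>))) (- B o\<^sub>L J (inverse \<mu>))" .
  moreover have "J \<mu> o\<^sub>L - (A - J (inverse \<mu>)) = id_blinfun - (J \<mu> o\<^sub>L A)"
    using False by (simp add: blinfun_compose_simps J_1 flip: J_mult)
  ultimately show ?thesis
    unfolding invertible_blinfun_def by auto
qed

lemma sum_bpow_J_compose_roots:
  assumes comm: "\<And>z. A o\<^sub>L J z = J z o\<^sub>L A" and k: "0 < k"
  shows "(\<Sum>j<k. \<Sum>m<k. bpow (J (root_unity k ^ j * \<mu>) o\<^sub>L A) m) = real k *\<^sub>R id_blinfun"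
proof -
  have "(\<Sum>j<k. \<Sum>m<k. bpow (J (root_unity k ^ j * \<mu>) o\<^sub>L A) m)
      = (\<Sum>m<k. \<Sum>j<k. J (\<mu> ^ m * (root_unity k ^ m) ^ j) o\<^sub>L bpow A m)"
    by (subst sum.swap) (simp add: bpow_J_compose[OF comm] power_mult_distrib mult_ac flip: power_mult)
  also have "\<dots> = (\<Sum>m<k. J (\<mu> ^ m * (\<Sum>j<k. (root_unity k ^ m) ^ j)) o\<^sub>L bpow A m)"
    by (simp add: J_sum blinfun_compose.sum_left sum_distrib_left)
  also have "\<dots> = (\<Sum>m<k. if m = 0 then real k *\<^sub>R id_blinfun else 0)"
    by (rule sum.cong) (simp_all add: sum_powers_root_unity J_0 J_of_nat)
  finally show ?thesis
    using k by simp
qed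

text \<open>Averaging the inverses of \<open>1 - \<zeta> \<mu> A\<close> over the \<open>k\<close>-th roots of unity \<open>\<zeta>\<close> inverts
  \<open>1 - \<mu>\<^sup>k A\<^sup>k\<close>: the geometric sums \<open>\<Sum>m<k. (\<zeta> \<mu> A)\<^sup>m\<close> add up to \<open>k\<close>.\<close>
lemma two_sided_inverse_root_average:
  assumes comm: "\<And>z. A o\<^sub>L J z = J z o\<^sub>L A" and k: "0 < k"
    and inv: "\<And>j. two_sided_inverse (id_blinfun - (J (root_unity k ^ j * \<mu>) o\<^sub>L A)) (F j)"
  shows "two_sided_inverse (id_blinfun - (J (\<mu> ^ k) o\<^sub>L bpow A k)) ((1 / real k) *\<^sub>R (\<Sum>j<k. F j))"
proof -
  define X where "X = id_blinfun - (J (\<mu> ^ k) o\<^sub>L bpow A k)"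
  define G where "G j = (\<Sum>m<k. bpow (J (root_unity k ^ j * \<mu>) o\<^sub>L A) m)" for j
  have XF: "X o\<^sub>L F j = G j \<and> F j o\<^sub>L X = G j" for j
  proof -
    have "(root_unity k ^ j * \<mu>) ^ k = \<mu> ^ k"
      using k by (simp add: power_mult_distrib root_unity_power_eq_1_iff flip: power_mult)
    then have "bpow (J (root_unity k ^ j * \<mu>) o\<^sub>L A) k = J (\<mu> ^ k) o\<^sub>L bpow A k"
      by (simp add: bpow_J_compose[OF comm])
    then have "X = G j o\<^sub>L (id_blinfun - (J (root_unity k ^ j * \<mu>) o\<^sub>L A))"
      and "X = (id_blinfun - (J (root_unity k ^ j * \<mu>) o\<^sub>L A)) o\<^sub>L G j"
      by (simp_all add: X_def G_def bpow_geometric_sum)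
    with inv[of j] show ?thesis
      unfolding two_sided_inverse_def by (metis blinfun_compose_assoc blinfun_compose_id id_blinfun_compose)
  qed
  have G: "(\<Sum>j<k. G j) = real k *\<^sub>R id_blinfun"
    unfolding G_def by (rule sum_bpow_J_compose_roots[OF comm k])
  show ?thesis
    unfolding two_sided_inverse_def X_def[symmetric]
    using XF k by (simp add: blinfun_compose_simps blinfun_compose.sum_left blinfun_compose.sum_right G)
qed

end

locale disc_invertible = complex_action J for J :: "complex \<Rightarrow> ('a::banach \<Rightarrow>\<^sub>L 'a)" +
  fixes A :: "'a \<Rightarrow>\<^sub>L 'a" and r0 :: real
  assumes A_commute: "\<And>z. A o\<^sub>L J z = J z o\<^sub>L A"
    and invertible_on_disc: "\<And>\<mu>. cmod \<mu> \<le> r0 \<Longrightarrow> invertible_blinfun (id_blinfun - (J \<mu> o\<^sub>L A))"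
begin

definition resolvent :: "complex \<Rightarrow> 'a \<Rightarrow>\<^sub>L 'a" where
  "resolvent \<mu> = (SOME B. two_sided_inverse (id_blinfun - (J \<mu> o\<^sub>L A)) B)"

definition averaged_resolvent :: "nat \<Rightarrow> complex \<Rightarrow> 'a \<Rightarrow>\<^sub>L 'a" where
  "averaged_resolvent k \<mu> = (1 / real k) *\<^sub>R (\<Sum>j<k. resolvent (root_unity k ^ j * \<mu>))"

lemma resolvent_inverse: "cmod \<mu> \<le> r0 \<Longrightarrow> two_sided_inverse (id_blinfun - (J \<mu> o\<^sub>L A)) (resolvent \<mu>)"
  using invertible_on_disc[of \<mu>] unfolding resolvent_def invertible_blinfun_def by (auto intro: someI_ex)

lemma lipschitz_resolvent:
  obtains L where "L-lipschitz_on (cball 0 r0) resolvent"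
proof -
  have "(norm A)-lipschitz_on (cball 0 r0) (\<lambda>\<mu>. id_blinfun - (J \<mu> o\<^sub>L A))"
  proof (rule lipschitz_onI)
    fix \<mu> \<nu> :: complex
    have "norm (J (\<nu> - \<mu>) o\<^sub>L A) \<le> cmod (\<nu> - \<mu>) * norm A"
      by (rule order_trans[OF norm_blinfun_compose mult_right_mono[OF norm_J_le norm_ge_zero]])
    then show "dist (id_blinfun - (J \<mu> o\<^sub>L A)) (id_blinfun - (J \<nu> o\<^sub>L A)) \<le> norm A * dist \<mu> \<nu>"
      by (simp add: dist_norm J_diff blinfun_compose_simps norm_minus_commute mult.commute)
  qed simp
  moreover have "\<And>\<mu>. \<mu> \<in> cball 0 r0 \<Longrightarrow> two_sided_inverse (id_blinfun - (J \<mu> o\<^sub>L A)) (resolvent \<mu>)"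
    by (simp add: resolvent_inverse)
  ultimately show ?thesis
    using lipschitz_on_two_sided_inverse[OF compact_cball] that by blast
qed

lemma averaged_resolvent_inverse:
  assumes "0 \<le> t" "t \<le> r0" "0 < k"
  shows "two_sided_inverse (id_blinfun - t ^ k *\<^sub>R bpow A k) (averaged_resolvent k (of_real t))"
proof -
  have "two_sided_inverse (id_blinfun - (J (of_real t ^ k) o\<^sub>L bpow A k)) (averaged_resolvent k (of_real t))"
    unfolding averaged_resolvent_def using assms
    by (intro two_sided_inverse_root_average A_commute resolvent_inverse) (simp_all add: norm_mult norm_power)
  then show ?thesis
    by (simp add: J_of_real blinfun_compose_simps flip: of_real_power)
qed

lemma averaged_resolvent_lipschitz:
  assumes L: "L-lipschitz_on (cball 0 r0) resolvent" and "0 < k" "cmod \<mu> \<le> r0" "cmod \<nu> \<le> r0"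
  shows "norm (averaged_resolvent k \<mu> - averaged_resolvent k \<nu>) \<le> L * cmod (\<mu> - \<nu>)"
proof -
  have "norm (resolvent (root_unity k ^ j * \<mu>) - resolvent (root_unity k ^ j * \<nu>)) \<le> L * cmod (\<mu> - \<nu>)" for j
  proof -
    have "dist (root_unity k ^ j * \<mu>) (root_unity k ^ j * \<nu>) = cmod (\<mu> - \<nu>)"
      unfolding dist_norm right_diff_distrib[symmetric] by (simp add: norm_mult norm_power)
    moreover have "root_unity k ^ j * \<mu> \<in> cball 0 r0" "root_unity k ^ j * \<nu> \<in> cball 0 r0"
      using assms by (simp_all add: norm_mult norm_power)
    ultimately show ?thesis
      using lipschitz_onD[OF L] by (metis dist_norm)
  qed
  then have "(\<Sum>j<k. norm (resolvent (root_unity k ^ j * \<mu>) - resolvent (root_unity k ^ j * \<nu>)))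
      \<le> of_nat (card {..<k}) * (L * cmod (\<mu> - \<nu>))"
    by (intro sum_bounded_above)
  then have "norm (\<Sum>j<k. resolvent (root_unity k ^ j * \<mu>) - resolvent (root_unity k ^ j * \<nu>))
      \<le> real k * (L * cmod (\<mu> - \<nu>))"
    by (intro order_trans[OF norm_sum]) simp
  moreover have "averaged_resolvent k \<mu> - averaged_resolvent k \<nu>
      = (1 / real k) *\<^sub>R (\<Sum>j<k. resolvent (root_unity k ^ j * \<mu>) - resolvent (root_unity k ^ j * \<nu>))"
    unfolding averaged_resolvent_def sum_subtractf scaleR_diff_right ..
  ultimately show ?thesis
    using assms(2) by (simp add: divide_simps mult.commute)
qed

lemma eventually_power_norm_le_half:
  assumes L: "L-lipschitz_on (cball 0 r0) resolvent"
    and t: "0 \<le> t" "t \<le> t'" "t' \<le> r0" "L * (t' - t) \<le> 1/8"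
    and lim: "(\<lambda>k. t ^ k * norm (bpow A k)) \<longlonglongrightarrow> 0"
  shows "\<forall>\<^sub>F k in sequentially. t' ^ k * norm (bpow A k) \<le> 1/2"
proof -
  have "\<forall>\<^sub>F k in sequentially. t ^ k * norm (bpow A k) < 1/16"
    by (rule order_tendstoD(2)[OF lim]) simp
  with eventually_gt_at_top[of 0] show ?thesis
  proof eventually_elim
    case (elim k)
    have "norm (averaged_resolvent k (of_real t) - id_blinfun)
        \<le> 2 * norm ((id_blinfun - t ^ k *\<^sub>R bpow A k) - id_blinfun)"
      by (rule norm_inverse_sub_id_le[OF averaged_resolvent_inverse]) (use elim t in auto)
    also have "\<dots> \<le> 1/8"
      using elim t by simp
    finally have "norm (averaged_resolvent k (of_real t') - id_blinfun) \<le> 1/8 + L * (t' - t)"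
      using averaged_resolvent_lipschitz[OF L elim(1), of "of_real t'" "of_real t"] t
        norm_triangle_ineq[of "averaged_resolvent k (of_real t') - averaged_resolvent k (of_real t)"
          "averaged_resolvent k (of_real t) - id_blinfun"]
      by (simp flip: of_real_diff)
    with t have near: "norm (averaged_resolvent k (of_real t') - id_blinfun) \<le> 1/4"
      by simp
    have "norm ((id_blinfun - t' ^ k *\<^sub>R bpow A k) - id_blinfun)
        \<le> 2 * norm (averaged_resolvent k (of_real t') - id_blinfun)"
      by (rule norm_inverse_sub_id_le[OF two_sided_inverse_sym[OF averaged_resolvent_inverse]])
        (use elim t near in auto)
    with near have "norm ((id_blinfun - t' ^ k *\<^sub>R bpow A k) - id_blinfun) \<le> 1/2"
      by simp
    with t show ?case
      by simp
  qed
qed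

text \<open>Rickart's elementary argument for the spectral radius formula: the set of radii \<open>t\<close>
  with \<open>t\<^sup>k \<parallel>A\<^sup>k\<parallel> \<longrightarrow> 0\<close> contains \<open>0\<close> and, by the previous lemma and the uniform
  Lipschitz bound on the resolvent, grows in steps of fixed length up to \<open>r0\<close>.\<close>
theorem power_norm_tendsto_zero:
  assumes "0 \<le> r" "r < r0"
  shows "(\<lambda>k. r ^ k * norm (bpow A k)) \<longlonglongrightarrow> 0"
proof -
  obtain L where L: "L-lipschitz_on (cball 0 r0) resolvent"
    by (rule lipschitz_resolvent)
  define \<delta> where "\<delta> = 1 / (8 * (L + 1))"
  have \<delta>: "0 < \<delta>" "L * \<delta> \<le> 1/8"
    using lipschitz_on_nonneg[OF L] by (simp_all add: \<delta>_def field_simps)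
  define P where "P t \<longleftrightarrow> (\<lambda>k. t ^ k * norm (bpow A k)) \<longlonglongrightarrow> 0" for t
  have step: "P (min r (t + \<delta>/2))" if t: "0 \<le> t" "t \<le> r" "P t" for t
  proof -
    define t' where "t' = min r0 (t + \<delta>)"
    have t': "t \<le> t'" "t' \<le> r0" "t' - t \<le> \<delta>" "min r (t + \<delta>/2) < t'"
      using t assms \<delta> by (simp_all add: t'_def min_less_iff_disj)
    have "L * (t' - t) \<le> 1/8"
      using mult_left_mono[OF t'(3) lipschitz_on_nonneg[OF L]] \<delta> by simp
    with t t' have "\<forall>\<^sub>F k in sequentially. t' ^ k * norm (bpow A k) \<le> 1/2"
      by (intro eventually_power_norm_le_half[OF L]) (simp_all add: P_def)
    then show ?thesis
      unfolding P_def by (rule power_mult_tendsto_zero_below[OF _ norm_ge_zero]) (use t t' in simp_all)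
  qed
  have reach: "P (min r (real n * (\<delta>/2)))" for n
  proof (induction n)
    case 0
    show ?case
      unfolding P_def by (rule LIMSEQ_imp_Suc) (use assms in simp)
  next
    case (Suc n)
    have "min r (real (Suc n) * (\<delta>/2)) = min r (min r (real n * (\<delta>/2)) + \<delta>/2)"
      using \<delta> by (cases "real n * (\<delta>/2) \<le> r") (simp_all add: distrib_right min_def)
    then show ?case
      using step[OF _ _ Suc] assms \<delta> by simp
  qed
  obtain n where "r / (\<delta>/2) \<le> real n"
    using real_arch_simple by blast
  then have "min r (real n * (\<delta>/2)) = r"
    using \<delta> by (intro min_absorb1) (simp add: field_simps)
  with reach[of n] show ?thesis
    unfolding P_def by simp
qed

end

context complex_action
begin

lemma power_norm_bounded_outside_spectrum:
  assumes comm: "\<And>z. A o\<^sub>L J z = J z o\<^sub>L A" and R: "0 \<le> R" "R < \<rho>"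
    and inv: "\<And>w. R < cmod w \<Longrightarrow> invertible_blinfun (A - J w)"
  obtains r M where "1 < r * \<rho>" "\<And>k. r ^ k * norm (bpow A k) \<le> M"
proof -
  define r0 where "r0 = 2 / (\<rho> + R)"
  define r where "r = (1 / \<rho> + r0) / 2"
  have "0 < 1 / \<rho>" "1 / \<rho> < r0"
    using R by (simp_all add: r0_def field_simps)
  then have r: "0 \<le> r" "r < r0" "1 < r * \<rho>"
    using R by (simp_all add: r_def field_simps)
  have "disc_invertible J A r0"
  proof
    fix \<mu> :: complex assume \<mu>: "cmod \<mu> \<le> r0"
    have "R < cmod (inverse \<mu>)" if "\<mu> \<noteq> 0"
    proof -
      have "R < (\<rho> + R) / 2" using R by simp
      also have "\<dots> = inverse r0" by (simp add: r0_def)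
      also have "\<dots> \<le> inverse (cmod \<mu>)"
        using \<mu> that by (intro le_imp_inverse_le) auto
      finally show ?thesis by (simp add: norm_inverse)
    qed
    then show "invertible_blinfun (id_blinfun - (J \<mu> o\<^sub>L A))"
      by (intro invertible_id_minus_J_compose inv)
  qed (rule comm)
  then have "(\<lambda>k. r ^ k * norm (bpow A k)) \<longlonglongrightarrow> 0"
    using r by (intro disc_invertible.power_norm_tendsto_zero)
  then have "Bseq (\<lambda>k. r ^ k * norm (bpow A k))"
    by (rule convergent_imp_Bseq[OF convergentI])
  then obtain M where "\<And>k. r ^ k * norm (bpow A k) \<le> M"
    unfolding Bseq_def by (metis abs_le_D1 real_norm_def)
  with r show ?thesis
    using that by blast
qed

lemma norm_bpow_tendsto_zero:
  assumes "\<And>z. A o\<^sub>L J z = J z o\<^sub>L A" "\<And>\<mu>. invertible_blinfun (id_blinfun - (J \<mu> o\<^sub>L A))"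
  shows "(\<lambda>k. norm (bpow A k)) \<longlonglongrightarrow> 0"
proof -
  have "disc_invertible J A 2"
    by standard (simp_all add: assms)
  then show ?thesis
    using disc_invertible.power_norm_tendsto_zero[of J A 2 1] by simp
qed

text \<open>Otherwise both \<open>A\<close> and \<open>A\<^sup>-\<^sup>1\<close> would have powers tending to \<open>0\<close>, although
  \<open>A\<^sup>-\<^sup>k A\<^sup>k = 1\<close>.\<close>
lemma ex_not_invertible_sub_J:
  assumes comm: "\<And>z. A o\<^sub>L J z = J z o\<^sub>L A" and nontrivial: "\<exists>v::'a. v \<noteq> 0"
  shows "\<exists>w. \<not> invertible_blinfun (A - J w)"
proof (rule ccontr)
  assume "\<nexists>w. \<not> invertible_blinfun (A - J w)"
  then have inv: "invertible_blinfun (A - J w)" for w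
    by blast
  then obtain V where V: "two_sided_inverse A V"
    using inv[of 0] by (auto simp: J_0 invertible_blinfun_def)
  have commV: "V o\<^sub>L J z = J z o\<^sub>L V" for z
    using two_sided_inverse_commute[OF V comm] .
  have "invertible_blinfun (id_blinfun - (J \<mu> o\<^sub>L V))" for \<mu>
  proof -
    obtain B where B: "two_sided_inverse (A - J \<mu>) B"
      using inv by (auto simp: invertible_blinfun_def)
    have "id_blinfun - (J \<mu> o\<^sub>L V) = V o\<^sub>L (A - J \<mu>)"
      using V commV by (simp add: blinfun_compose_simps two_sided_inverse_def)
    then show ?thesis
      using two_sided_inverse_compose[OF two_sided_inverse_sym[OF V] B]
      by (auto simp: invertible_blinfun_def)
  qed
  from tendsto_mult[OF norm_bpow_tendsto_zero[OF commV this]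
      norm_bpow_tendsto_zero[OF comm invertible_id_minus_J_compose[OF inv]]]
  have lim: "(\<lambda>k. norm (bpow V k) * norm (bpow A k)) \<longlonglongrightarrow> 0"
    by simp
  have "norm (id_blinfun :: 'a \<Rightarrow>\<^sub>L 'a) \<le> norm (bpow V k) * norm (bpow A k)" for k
  proof -
    have "bpow V k o\<^sub>L bpow A k = id_blinfun"
      using two_sided_inverse_bpow[OF V] by (simp add: two_sided_inverse_def)
    then show ?thesis
      using norm_blinfun_compose[of "bpow V k" "bpow A k"] by simp
  qed
  then have "norm (id_blinfun :: 'a \<Rightarrow>\<^sub>L 'a) \<le> 0"
    by (intro LIMSEQ_le_const[OF lim]) blast
  then have "id_blinfun = (0 :: 'a \<Rightarrow>\<^sub>L 'a)"
    by simp
  then have "v = 0" for v :: 'a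
    using blinfun.zero_left[of v] by (metis blinfun_apply_id_blinfun id_apply)
  with nontrivial show False
    by blast
qed

end

section \<open>Quaternions and quaternionic bimodules\<close>

lemma quat_of_real_sel [simp]:
  "qRe (of_real r) = r" "qIm1 (of_real r) = 0" "qIm2 (of_real r) = 0" "qIm3 (of_real r) = 0"
  by (simp_all add: of_real_def)

lemma norm_quat_squared: "(norm q)\<^sup>2 = (qRe q)\<^sup>2 + (qIm1 q)\<^sup>2 + (qIm2 q)\<^sup>2 + (qIm3 q)\<^sup>2"
  by (simp add: norm_quat_def)

lemma norm_quat_mult: "norm (p * q) = norm p * norm (q::quat)"
proof -
  have "(norm (p * q))\<^sup>2 = (norm p * norm q)\<^sup>2"
    unfolding power_mult_distrib norm_quat_squared by (simp add: power2_eq_square algebra_simps)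
  then show ?thesis
    by (simp add: power2_eq_iff_nonneg)
qed

lemma norm_quat_one [simp]: "norm (1::quat) = 1"
  by (simp add: norm_quat_def)

lemma norm_quat_power: "norm (p ^ k) = norm (p::quat) ^ k"
  by (induction k) (simp_all add: norm_quat_mult)

lemma quat_mult_cnj:
  shows "s * cnj_quat s = of_real ((norm s)\<^sup>2)" and "cnj_quat s * s = of_real ((norm s)\<^sup>2)"
proof -
  have "norm s * norm s = qRe s * qRe s + qIm1 s * qIm1 s + qIm2 s * qIm2 s + qIm3 s * qIm3 s"
    using norm_quat_squared[of s] by (simp add: power2_eq_square)
  then show "s * cnj_quat s = of_real ((norm s)\<^sup>2)" "cnj_quat s * s = of_real ((norm s)\<^sup>2)"
    by (rule_tac [!] quat_eqI) (simp_all add: power2_eq_square algebra_simps del: of_real_power)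
qed

lemma quat_add_cnj: "s + cnj_quat s = of_real (2 * qRe s)"
  by (rule quat_eqI) (simp_all del: of_real_mult)

lemma quat_inverse_mult: "s \<noteq> 0 \<Longrightarrow> inverse s * s = (1::quat)"
proof -
  have "inverse s = (1 / (norm s)\<^sup>2) *\<^sub>R cnj_quat s"
    by (rule quat_eqI) (simp_all add: norm_quat_squared)
  moreover assume "s \<noteq> 0"
  ultimately show ?thesis
    by (simp add: quat_mult_cnj of_real_def del: of_real_power)
qed

lemma norm_quat_inverse: "s \<noteq> 0 \<Longrightarrow> norm (inverse s) = inverse (norm (s::quat))"
  using norm_quat_mult[of "inverse s" s] quat_inverse_mult[of s] by (simp add: field_simps)

lemma abs_qRe_le_norm: "\<bar>qRe s\<bar> \<le> norm s"
  unfolding norm_quat_def by (rule real_le_rsqrt) simp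

definition quat_of_complex :: "complex \<Rightarrow> quat" where
  "quat_of_complex z = Quat (Re z) (Im z) 0 0"

lemma quat_of_complex_sel [simp]:
  "qRe (quat_of_complex z) = Re z" "qIm1 (quat_of_complex z) = Im z"
  "qIm2 (quat_of_complex z) = 0" "qIm3 (quat_of_complex z) = 0"
  by (simp_all add: quat_of_complex_def)

lemma quat_of_complex_mult: "quat_of_complex (z * w) = quat_of_complex z * quat_of_complex w"
  by (rule quat_eqI) simp_all

lemma quat_of_complex_add: "quat_of_complex (z + w) = quat_of_complex z + quat_of_complex w"
  by (rule quat_eqI) simp_all

lemma quat_of_complex_of_real: "quat_of_complex (of_real r) = of_real r"
  by (rule quat_eqI) simp_all

lemma norm_quat_of_complex [simp]: "norm (quat_of_complex z) = cmod z"
  by (simp add: norm_quat_def cmod_def)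

definition rmul :: "('a \<Rightarrow> quat \<Rightarrow> 'a) \<Rightarrow> quat \<Rightarrow> ('a::real_normed_vector \<Rightarrow>\<^sub>L 'a)" where
  "rmul qr s = Blinfun (\<lambda>v. qr v s)"

locale quaternionic_bimodule =
  fixes ql :: "quat \<Rightarrow> 'a::banach \<Rightarrow> 'a" and qr :: "'a \<Rightarrow> quat \<Rightarrow> 'a"
  assumes two_sided: "two_sided_qbanach ql qr"
begin

lemma bimodule_laws:
  shows ql_add_quat: "ql (s + t) v = ql s v + ql t v"
    and ql_add_vec: "ql s (v + w) = ql s v + ql s w"
    and ql_mult: "ql (s * t) v = ql s (ql t v)"
    and ql_one: "ql 1 v = v"
    and qr_add_quat: "qr v (s + t) = qr v s + qr v t"
    and qr_add_vec: "qr (v + w) s = qr v s + qr w s"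
    and qr_mult: "qr v (s * t) = qr (qr v s) t"
    and ql_qr: "ql s (qr v t) = qr (ql s v) t"
    and ql_of_real: "ql (of_real r) v = r *\<^sub>R v"
    and qr_of_real: "qr v (of_real r) = r *\<^sub>R v"
    and norm_ql: "norm (ql s v) = norm s * norm v"
    and norm_qr: "norm (qr v s) = norm s * norm v"
  by (simp_all add: two_sided[unfolded two_sided_qbanach_def])

lemma ql_scaleR: "ql s (r *\<^sub>R v) = r *\<^sub>R ql s v"
proof -
  have "of_real r * s = s * of_real r"
    by (simp add: of_real_def)
  then show ?thesis
    by (metis ql_mult ql_of_real)
qed

lemma qr_scaleR: "qr (r *\<^sub>R v) s = r *\<^sub>R qr v s"
  by (metis ql_qr ql_of_real)

lemma qr_diff_vec: "qr (v - w) s = qr v s - qr w s"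
  by (metis add_diff_cancel qr_add_vec diff_add_cancel)

lemma bounded_linear_ql: "bounded_linear (ql s)"
  by (rule bounded_linear_intro[where K="norm s"]) (simp_all add: ql_add_vec ql_scaleR norm_ql)

lemma bounded_linear_qr: "bounded_linear (\<lambda>v. qr v s)"
  by (rule bounded_linear_intro[where K="norm s"]) (simp_all add: qr_add_vec qr_scaleR norm_qr)

lemma lmul_apply [simp]: "blinfun_apply (lmul ql s) = ql s"
  by (simp add: lmul_def bounded_linear_Blinfun_apply bounded_linear_ql)

lemma lmul_mult: "lmul ql (s * t) = lmul ql s o\<^sub>L lmul ql t"
  by (rule blinfun_eqI) (simp add: ql_mult)

lemma lmul_one: "lmul ql 1 = id_blinfun"
  by (rule blinfun_eqI) (simp add: ql_one)

lemma lmul_add: "lmul ql (s + t) = lmul ql s + lmul ql t"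
  by (rule blinfun_eqI) (simp add: ql_add_quat blinfun.add_left)

lemma lmul_of_real: "lmul ql (of_real r) = r *\<^sub>R id_blinfun"
  by (rule blinfun_eqI) (simp add: ql_of_real blinfun.scaleR_left)

lemma norm_lmul_le: "norm (lmul ql s) \<le> norm s"
  by (rule norm_blinfun_bound) (simp_all add: norm_ql)

lemma rmul_apply [simp]: "blinfun_apply (rmul qr s) v = qr v s"
  by (simp add: rmul_def bounded_linear_Blinfun_apply bounded_linear_qr)

lemma right_linear_commute_rmul: "right_linear qr A \<Longrightarrow> A o\<^sub>L rmul qr s = rmul qr s o\<^sub>L A"
  by (rule blinfun_eqI) (simp add: right_linear_def)

sublocale complex_action "\<lambda>z. rmul qr (quat_of_complex z)"
proof
  fix z w :: complex and r :: real
  show "rmul qr (quat_of_complex (z * w)) = rmul qr (quat_of_complex z) o\<^sub>L rmul qr (quat_of_complex w)"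
    by (rule blinfun_eqI) (simp add: qr_mult mult.commute[of z w] quat_of_complex_mult)
  show "rmul qr (quat_of_complex (z + w)) = rmul qr (quat_of_complex z) + rmul qr (quat_of_complex w)"
    by (rule blinfun_eqI) (simp add: quat_of_complex_add qr_add_quat blinfun.add_left)
  show "rmul qr (quat_of_complex (of_real r)) = r *\<^sub>R id_blinfun"
    by (rule blinfun_eqI) (simp add: quat_of_complex_of_real qr_of_real blinfun.scaleR_left)
  show "norm (rmul qr (quat_of_complex z)) \<le> cmod z"
    by (rule norm_blinfun_bound) (simp_all add: norm_qr)
qed

lemma Qop_alt_def: "Qop s T = (T o\<^sub>L T) - (2 * qRe s) *\<^sub>R T + (norm s)\<^sup>2 *\<^sub>R id_blinfun"
  by (simp add: Qop_def bpow_Suc numeral_2_eq_2)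

lemma right_linear_Qop: "right_linear qr T \<Longrightarrow> right_linear qr (Qop s T)"
  unfolding right_linear_def Qop_alt_def
  by (simp add: blinfun.diff_left blinfun.add_left blinfun.scaleR_left qr_diff_vec qr_add_vec qr_scaleR)

lemma right_linear_two_sided_inverse:
  "right_linear qr A \<Longrightarrow> two_sided_inverse A B \<Longrightarrow> right_linear qr B"
  unfolding right_linear_def two_sided_inverse_def
  by (metis blinfun_apply_blinfun_compose blinfun_apply_id_blinfun)

lemma S_resolvent_iff:
  "right_linear qr T \<Longrightarrow> s \<in> S_resolvent qr T \<longleftrightarrow> invertible_blinfun (Qop s T)"
  unfolding S_resolvent_def invertible_B_def invertible_blinfun_def two_sided_inverse_def
  using right_linear_two_sided_inverse[OF right_linear_Qop]
  by (auto simp: two_sided_inverse_def)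

lemma Qop_quat_of_complex:
  assumes "right_linear qr T"
  shows "Qop (quat_of_complex w) T
      = (T - rmul qr (quat_of_complex w)) o\<^sub>L (T - rmul qr (quat_of_complex (cnj w)))"
    and "Qop (quat_of_complex w) T
      = (T - rmul qr (quat_of_complex (cnj w))) o\<^sub>L (T - rmul qr (quat_of_complex w))"
proof -
  let ?J = "\<lambda>z. rmul qr (quat_of_complex z)"
  have comm: "T o\<^sub>L ?J z = ?J z o\<^sub>L T" for z
    by (rule right_linear_commute_rmul[OF assms])
  have sum: "?J w + ?J (cnj w) = (2 * Re w) *\<^sub>R id_blinfun"
    by (simp flip: J_add J_of_real add: complex_add_cnj)
  have prod: "?J w o\<^sub>L ?J (cnj w) = (cmod w)\<^sup>2 *\<^sub>R id_blinfun"
    unfolding J_mult[symmetric] complex_norm_square[symmetric] J_of_real ..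
  have "(T - ?J w) o\<^sub>L (T - ?J (cnj w)) = (T o\<^sub>L T) - ((?J w + ?J (cnj w)) o\<^sub>L T) + (?J w o\<^sub>L ?J (cnj w))"
    by (simp add: blinfun_compose_simps comm algebra_simps)
  then show "Qop (quat_of_complex w) T = (T - ?J w) o\<^sub>L (T - ?J (cnj w))"
    unfolding sum prod Qop_alt_def by (simp add: blinfun_compose_simps)
  moreover have "(T - ?J (cnj w)) o\<^sub>L (T - ?J w) = (T - ?J w) o\<^sub>L (T - ?J (cnj w))"
    by (simp add: blinfun_compose_simps comm algebra_simps J_commute)
  ultimately show "Qop (quat_of_complex w) T = (T - ?J (cnj w)) o\<^sub>L (T - ?J w)"
    by simp
qed

lemma invertible_sub_rmul_if_S_resolvent:
  assumes "right_linear qr T" "quat_of_complex w \<in> S_resolvent qr T"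
  shows "invertible_blinfun (T - rmul qr (quat_of_complex w))"
  using assms two_sided_inverse_of_commuting_factor[OF Qop_quat_of_complex[OF assms(1)]]
  by (auto simp: S_resolvent_iff invertible_blinfun_def)

lemma S_resolvent_if_norm_gt:
  assumes T: "right_linear qr T" and s: "3 * norm T < norm s"
  shows "s \<in> S_resolvent qr T"
proof -
  define c where "c = (norm s)\<^sup>2"
  have s0: "0 < norm s"
    using s norm_ge_zero[of T] by linarith
  then have c: "0 < c"
    by (simp add: c_def)
  define A where "A = (1 / c) *\<^sub>R ((2 * qRe s) *\<^sub>R T - (T o\<^sub>L T))"
  have Q: "Qop s T = c *\<^sub>R (id_blinfun - A)"
    using c by (simp add: A_def Qop_alt_def c_def algebra_simps)
  have "norm ((2 * qRe s) *\<^sub>R T - (T o\<^sub>L T)) \<le> 2 * norm s * norm T + norm T * norm T"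
    using abs_qRe_le_norm[of s] norm_blinfun_compose[of T T]
      norm_triangle_ineq4[of "(2 * qRe s) *\<^sub>R T" "T o\<^sub>L T"]
      mult_right_mono[OF abs_qRe_le_norm[of s] norm_ge_zero[of T]]
    by (simp add: abs_mult)
  also have "\<dots> < c"
    using s mult_strict_right_mono[OF s s0] mult_right_mono[of "norm T" "norm s" "norm T"]
    by (simp add: c_def power2_eq_square algebra_simps)
  finally have "norm A < 1"
    using c by (simp add: A_def)
  then obtain B where "two_sided_inverse (id_blinfun - A) B"
    using invertible_id_minus by (auto simp: invertible_blinfun_def)
  then have "two_sided_inverse (Qop s T) (inverse c *\<^sub>R B)"
    unfolding Q using c by (intro two_sided_inverse_scaleR) auto
  then show ?thesis
    using T by (auto simp: S_resolvent_iff invertible_blinfun_def)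
qed

lemma S_spectrum_nonempty:
  assumes "right_linear qr T" "\<exists>v::'a. v \<noteq> 0"
  shows "S_spectrum qr T \<noteq> {}"
proof -
  obtain w where "\<not> invertible_blinfun (T - rmul qr (quat_of_complex w))"
    using ex_not_invertible_sub_J[OF right_linear_commute_rmul[OF assms(1)] assms(2)] by blast
  then have "quat_of_complex w \<in> S_spectrum qr T"
    using invertible_sub_rmul_if_S_resolvent[OF assms(1)] by (auto simp: S_spectrum_def)
  then show ?thesis
    by blast
qed

lemma bdd_above_norm_S_spectrum:
  assumes "right_linear qr T"
  shows "bdd_above (norm ` S_spectrum qr T)"
proof (rule bdd_aboveI)
  fix x assume "x \<in> norm ` S_spectrum qr T"
  then show "x \<le> 3 * norm T"
    using S_resolvent_if_norm_gt[OF assms] by (force simp: S_spectrum_def)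
qed

lemma S_radius_nonneg:
  assumes "right_linear qr T" "\<exists>v::'a. v \<noteq> 0"
  shows "0 \<le> S_radius qr T"
proof -
  obtain s where "s \<in> S_spectrum qr T"
    using S_spectrum_nonempty[OF assms] by blast
  then have "norm s \<le> S_radius qr T"
    unfolding S_radius_def by (intro cSup_upper bdd_above_norm_S_spectrum[OF assms(1)]) simp
  then show ?thesis
    using norm_ge_zero[of s] by linarith
qed

lemma S_resolvent_if_S_radius_less:
  assumes "right_linear qr T" "S_radius qr T < norm s"
  shows "s \<in> S_resolvent qr T"
proof (rule ccontr)
  assume "s \<notin> S_resolvent qr T"
  then have "norm s \<le> S_radius qr T"
    unfolding S_radius_def
    by (intro cSup_upper bdd_above_norm_S_spectrum[OF assms(1)]) (simp add: S_spectrum_def)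
  with assms(2) show False
    by simp
qed

lemma power_norm_bounded_beyond_S_radius:
  assumes T: "right_linear qr T" and nontrivial: "\<exists>v::'a. v \<noteq> 0" and s: "S_radius qr T < norm s"
  obtains r M where "1 < r * norm s" "\<And>k. r ^ k * norm (bpow T k) \<le> M"
proof -
  have "invertible_blinfun (T - rmul qr (quat_of_complex w))" if "S_radius qr T < cmod w" for w
    using that by (intro invertible_sub_rmul_if_S_resolvent T S_resolvent_if_S_radius_less) simp_all
  then show ?thesis
    using power_norm_bounded_outside_spectrum[OF right_linear_commute_rmul[OF T]
        S_radius_nonneg[OF T nontrivial] s] that
    by blast
qed

end

section \<open>The series expansion of \<open>S\<^sub>L\<^sup>-\<^sup>n(s,T)\<close>\<close>

text \<open>\<open>multichoose n m\<close> counts the multisets of size \<open>m\<close> over \<open>n\<close> elements, i.e. it is the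
  coefficient of \<open>x\<^sup>m\<close> in \<open>1 / (1 - x)\<^sup>n\<close>; truncated subtraction makes \<open>multichoose 0 m\<close>
  equal to \<open>1\<close> for \<open>m = 0\<close> and \<open>0\<close> otherwise, as it should.\<close>
definition multichoose :: "nat \<Rightarrow> nat \<Rightarrow> nat" where
  "multichoose n m = (n + m - 1) choose m"

lemma multichoose_0_right [simp]: "multichoose n 0 = 1"
  by (simp add: multichoose_def)

lemma multichoose_0_Suc [simp]: "multichoose 0 (Suc m) = 0"
  by (simp add: multichoose_def)

lemma multichoose_Suc_Suc:
  "multichoose (Suc n) (Suc m) = multichoose (Suc n) m + multichoose n (Suc m)"
  by (simp add: multichoose_def)

lemma multichoose_eq_binomial: "0 < n \<Longrightarrow> multichoose n m = (m + n - 1) choose (n - 1)"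
  unfolding multichoose_def by (subst binomial_symmetric) (auto simp: add.commute)

lemma summable_multichoose_power:
  assumes n: "0 < n" and q: "0 \<le> q" "q < 1"
  shows "summable (\<lambda>m. real (multichoose n m) * q ^ m)"
proof -
  have "(\<lambda>m. ((- real n) gchoose m) * (- q) ^ m) sums (1 + - q) powr (- real n)"
    using q by (intro gen_binomial_real) simp
  moreover have "((- real n) gchoose m) * (- q) ^ m = real (multichoose n m) * q ^ m" for m
  proof -
    have "((- real n) gchoose m) * (- q) ^ m = ((real n + real m - 1) gchoose m) * ((-1) ^ m * (- q) ^ m)"
      by (simp add: gbinomial_minus mult_ac)
    also have "(-1) ^ m * (- q) ^ m = q ^ m"
      by (simp flip: power_mult_distrib)
    also have "real n + real m - 1 = real (n + m - 1)"
      using n by simp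
    finally show ?thesis
      by (simp add: multichoose_def binomial_gbinomial)
  qed
  ultimately show ?thesis
    by (simp add: sums_summable)
qed

lemma sum_binomial_Suc_scaleR:
  fixes a :: "nat \<Rightarrow> 'v::real_vector"
  shows "(\<Sum>m\<le>Suc n. real (Suc n choose m) *\<^sub>R a m) =
    (\<Sum>m\<le>n. real (n choose m) *\<^sub>R a m) + (\<Sum>m\<le>n. real (n choose m) *\<^sub>R a (Suc m))"
proof -
  have "(\<Sum>m\<le>Suc n. real (Suc n choose m) *\<^sub>R a m)
      = a 0 + (\<Sum>m\<le>n. real (n choose Suc m) *\<^sub>R a (Suc m)) + (\<Sum>m\<le>n. real (n choose m) *\<^sub>R a (Suc m))"
    by (subst sum.atMost_Suc_shift) (simp add: scaleR_add_left sum.distrib algebra_simps)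
  also have "a 0 + (\<Sum>m\<le>n. real (n choose Suc m) *\<^sub>R a (Suc m)) = (\<Sum>m\<le>Suc n. real (n choose m) *\<^sub>R a m)"
    by (subst sum.atMost_Suc_shift) simp
  also have "\<dots> = (\<Sum>m\<le>n. real (n choose m) *\<^sub>R a m)"
    by simp
  finally show ?thesis .
qed

definition SL_term ::
    "(quat \<Rightarrow> 'a \<Rightarrow> 'a) \<Rightarrow> nat \<Rightarrow> quat \<Rightarrow> ('a::real_normed_vector \<Rightarrow>\<^sub>L 'a) \<Rightarrow> nat \<Rightarrow> ('a \<Rightarrow>\<^sub>L 'a)"
  where
  "SL_term ql n s T m = real (multichoose n m) *\<^sub>R (bpow T m o\<^sub>L lmul ql (inverse s ^ (m + n)))"

definition SL_series ::
    "(quat \<Rightarrow> 'a \<Rightarrow> 'a) \<Rightarrow> nat \<Rightarrow> quat \<Rightarrow> ('a::real_normed_vector \<Rightarrow>\<^sub>L 'a) \<Rightarrow> ('a \<Rightarrow>\<^sub>L 'a)"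
  where
  "SL_series ql n s T = suminf (SL_term ql n s T)"

definition SL_numerator ::
    "(quat \<Rightarrow> 'a \<Rightarrow> 'a) \<Rightarrow> nat \<Rightarrow> quat \<Rightarrow> ('a::real_normed_vector \<Rightarrow>\<^sub>L 'a) \<Rightarrow> ('a \<Rightarrow>\<^sub>L 'a)"
  where "SL_numerator ql n s T =
    (\<Sum>m\<le>n. real (n choose m) *\<^sub>R (bpow (- T) m o\<^sub>L lmul ql (cnj_quat s ^ (n - m))))"

context quaternionic_bimodule
begin

lemma SL_term_0_sums: "SL_term ql 0 s T sums id_blinfun"
proof -
  have "SL_term ql 0 s T = (\<lambda>m. if m = 0 then id_blinfun else 0)"
  proof
    fix m
    show "SL_term ql 0 s T m = (if m = 0 then id_blinfun else 0)"
      by (cases m) (simp_all add: SL_term_def lmul_one)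
  qed
  then show ?thesis
    using sums_single[of 0 "\<lambda>_. id_blinfun :: 'a \<Rightarrow>\<^sub>L 'a"] by simp
qed

lemma summable_SL_term:
  assumes rs: "1 < r * norm s" and M: "\<And>k. r ^ k * norm (bpow T k) \<le> M" and n: "0 < n"
  shows "summable (SL_term ql n s T)"
proof -
  have "0 < r * norm s"
    using rs by linarith
  then have s: "0 < norm s" and r: "0 < r"
    using norm_ge_zero[of s] by (auto simp: zero_less_mult_iff)
  define q where "q = 1 / (r * norm s)"
  have q: "0 \<le> q" "q < 1"
    using rs by (simp_all add: q_def)
  show ?thesis
  proof (rule summable_comparison_test'[OF summable_mult[OF summable_multichoose_power[OF n q]]])
    fix m
    have T: "norm (bpow T m) \<le> M / r ^ m"
      using M[of m] r by (simp add: field_simps)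
    have L: "norm (lmul ql (inverse s ^ (m + n))) \<le> (1 / norm s) ^ (m + n)"
      using norm_lmul_le[of "inverse s ^ (m + n)"] s
      by (simp add: norm_quat_power norm_quat_inverse divide_inverse power_inverse)
    have "norm (SL_term ql n s T m)
        \<le> real (multichoose n m) * (norm (bpow T m) * norm (lmul ql (inverse s ^ (m + n))))"
      unfolding SL_term_def by (simp add: mult_left_mono norm_blinfun_compose)
    also have "\<dots> \<le> real (multichoose n m) * ((M / r ^ m) * (1 / norm s) ^ (m + n))"
      using T L order_trans[OF norm_ge_zero T] by (intro mult_left_mono mult_mono) auto
    also have "\<dots> = (M / norm s ^ n) * (real (multichoose n m) * q ^ m)"
      using r s by (simp add: q_def power_add field_simps power_mult_distrib)
    finally show "norm (SL_term ql n s T m) \<le> (M / norm s ^ n) * (real (multichoose n m) * q ^ m)" .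
  qed
qed

lemma lmul_inverse_power_Suc:
  "s \<noteq> 0 \<Longrightarrow> lmul ql (inverse s ^ Suc k) o\<^sub>L lmul ql s = lmul ql (inverse s ^ k)"
proof -
  assume "s \<noteq> 0"
  then have "inverse s ^ Suc k * s = inverse s ^ k"
    unfolding power_Suc2 mult.assoc quat_inverse_mult[OF \<open>s \<noteq> 0\<close>] by simp
  then show ?thesis
    by (simp flip: lmul_mult)
qed

lemma SL_term_recurrence:
  assumes "s \<noteq> 0"
  shows "(SL_term ql (Suc n) s T m o\<^sub>L lmul ql s)
      - (if m = 0 then 0 else T o\<^sub>L SL_term ql (Suc n) s T (m - 1)) = SL_term ql n s T m"
proof (cases m)
  case 0
  then show ?thesis
    using lmul_inverse_power_Suc[OF assms, of n] by (simp add: SL_term_def)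
next
  case (Suc j)
  have "SL_term ql (Suc n) s T (Suc j) o\<^sub>L lmul ql s
      = real (multichoose (Suc n) (Suc j)) *\<^sub>R (bpow T (Suc j) o\<^sub>L lmul ql (inverse s ^ (Suc j + n)))"
    using lmul_inverse_power_Suc[OF assms, of "Suc j + n"]
    by (simp add: SL_term_def blinfun_compose_simps blinfun_compose_assoc)
  moreover have "T o\<^sub>L SL_term ql (Suc n) s T j
      = real (multichoose (Suc n) j) *\<^sub>R (bpow T (Suc j) o\<^sub>L lmul ql (inverse s ^ (Suc j + n)))"
    by (simp add: SL_term_def blinfun_compose_simps blinfun_compose_assoc bpow_Suc)
  ultimately show ?thesis
    using Suc by (simp add: SL_term_def multichoose_Suc_Suc scaleR_add_left)
qed

lemma SL_series_Suc:
  assumes "s \<noteq> 0" and "summable (SL_term ql (Suc n) s T)"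
  shows "(SL_series ql (Suc n) s T o\<^sub>L lmul ql s) - (T o\<^sub>L SL_series ql (Suc n) s T) = SL_series ql n s T"
proof -
  define S where "S = SL_series ql (Suc n) s T"
  have S: "SL_term ql (Suc n) s T sums S"
    using assms(2) by (simp add: S_def SL_series_def summable_sums)
  define u where "u m = (if m = 0 then 0 else T o\<^sub>L SL_term ql (Suc n) s T (m - 1))" for m
  have "(\<lambda>m. u (Suc m)) sums (T o\<^sub>L S)"
    unfolding u_def using bounded_linear.sums[OF blinfun_compose.bounded_linear_right S] by simp
  then have "u sums ((T o\<^sub>L S) + u 0)"
    by (simp only: sums_Suc_iff)
  then have "u sums (T o\<^sub>L S)"
    by (simp add: u_def)
  with bounded_linear.sums[OF blinfun_compose.bounded_linear_left S]
  have "(\<lambda>m. (SL_term ql (Suc n) s T m o\<^sub>L lmul ql s) - u m) sums ((S o\<^sub>L lmul ql s) - (T o\<^sub>L S))"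
    by (rule sums_diff)
  moreover have "(\<lambda>m. (SL_term ql (Suc n) s T m o\<^sub>L lmul ql s) - u m) = SL_term ql n s T"
    by (rule ext) (simp only: u_def SL_term_recurrence[OF assms(1)])
  ultimately show ?thesis
    by (simp add: S_def SL_series_def sums_unique)
qed

lemma Qop_compose:
  "Qop s T o\<^sub>L X = (T o\<^sub>L ((T o\<^sub>L X) - (X o\<^sub>L lmul ql s)))
      - (((T o\<^sub>L X) - (X o\<^sub>L lmul ql s)) o\<^sub>L lmul ql (cnj_quat s))"
proof -
  have "lmul ql s + lmul ql (cnj_quat s) = (2 * qRe s) *\<^sub>R id_blinfun"
    unfolding lmul_add[symmetric] quat_add_cnj lmul_of_real ..
  then have add: "(T o\<^sub>L (X o\<^sub>L lmul ql s)) + (T o\<^sub>L (X o\<^sub>L lmul ql (cnj_quat s))) = (2 * qRe s) *\<^sub>R (T o\<^sub>L X)"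
    unfolding blinfun_compose.add_right[symmetric] by (simp add: blinfun_compose_simps)
  have "lmul ql s o\<^sub>L lmul ql (cnj_quat s) = (norm s)\<^sup>2 *\<^sub>R id_blinfun"
    unfolding lmul_mult[symmetric] quat_mult_cnj(1) lmul_of_real ..
  then have mult: "X o\<^sub>L lmul ql s o\<^sub>L lmul ql (cnj_quat s) = (norm s)\<^sup>2 *\<^sub>R X"
    by (simp add: blinfun_compose_assoc blinfun_compose_simps)
  have "(T o\<^sub>L ((T o\<^sub>L X) - (X o\<^sub>L lmul ql s))) - (((T o\<^sub>L X) - (X o\<^sub>L lmul ql s)) o\<^sub>L lmul ql (cnj_quat s))
      = (T o\<^sub>L T o\<^sub>L X) - ((T o\<^sub>L (X o\<^sub>L lmul ql s)) + (T o\<^sub>L (X o\<^sub>L lmul ql (cnj_quat s))))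
        + (X o\<^sub>L lmul ql s o\<^sub>L lmul ql (cnj_quat s))"
    by (simp add: blinfun_compose_simps blinfun_compose_assoc algebra_simps)
  also have "\<dots> = Qop s T o\<^sub>L X"
    unfolding add mult Qop_alt_def by (simp add: blinfun_compose_simps)
  finally show ?thesis
    by simp
qed

lemma Qop_commute: "Qop s T o\<^sub>L T = T o\<^sub>L Qop s T"
  unfolding Qop_alt_def by (simp add: blinfun_compose_simps blinfun_compose_assoc)

lemma SL_numerator_0: "SL_numerator ql 0 s T = id_blinfun"
  by (simp add: SL_numerator_def lmul_one)

lemma SL_numerator_Suc:
  "SL_numerator ql (Suc n) s T
    = (SL_numerator ql n s T o\<^sub>L lmul ql (cnj_quat s)) - (T o\<^sub>L SL_numerator ql n s T)"
proof -
  define c where "c = cnj_quat s"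
  define a where "a m = (-1) ^ m *\<^sub>R (bpow T m o\<^sub>L lmul ql (c ^ (Suc n - m)))" for m
  have "SL_numerator ql (Suc n) s T = (\<Sum>m\<le>Suc n. real (Suc n choose m) *\<^sub>R a m)"
    by (simp add: SL_numerator_def a_def c_def bpow_uminus blinfun_compose_simps)
  also have "(\<Sum>m\<le>n. real (n choose m) *\<^sub>R a m) = SL_numerator ql n s T o\<^sub>L lmul ql c"
    unfolding SL_numerator_def blinfun_compose.sum_left
  proof (rule sum.cong[OF refl])
    fix m assume "m \<in> {..n}"
    then have "c ^ (Suc n - m) = c ^ (n - m) * c"
      by (simp add: Suc_diff_le power_commutes)
    then show "real (n choose m) *\<^sub>R a m =
        real (n choose m) *\<^sub>R (bpow (- T) m o\<^sub>L lmul ql (cnj_quat s ^ (n - m))) o\<^sub>L lmul ql c"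
      by (simp add: a_def c_def bpow_uminus blinfun_compose_simps blinfun_compose_assoc lmul_mult)
  qed
  moreover have "(\<Sum>m\<le>n. real (n choose m) *\<^sub>R a (Suc m)) = - (T o\<^sub>L SL_numerator ql n s T)"
    unfolding SL_numerator_def blinfun_compose.sum_right sum_negf[symmetric]
    by (rule sum.cong[OF refl])
      (simp add: a_def c_def bpow_uminus blinfun_compose_simps bpow_Suc blinfun_compose_assoc)
  ultimately show ?thesis
    unfolding sum_binomial_Suc_scaleR c_def by simp
qed

text \<open>Both sides satisfy \<open>X\<^sub>n\<^sub>+\<^sub>1 = X\<^sub>n (cnj s) - T X\<^sub>n\<close>: for the series, combine
  \<open>S\<^sub>n\<^sub>+\<^sub>1 s - T S\<^sub>n\<^sub>+\<^sub>1 = S\<^sub>n\<close> with \<open>Q\<^sub>s(T) X = T Y - Y (cnj s)\<close>, where \<open>Y = T X - X s\<close>.\<close>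
lemma Qop_power_compose_SL_series:
  assumes "s \<noteq> 0" and summable: "\<And>k. summable (SL_term ql (Suc k) s T)"
  shows "bpow (Qop s T) n o\<^sub>L SL_series ql n s T = SL_numerator ql n s T"
proof (induction n)
  case 0
  show ?case
    using sums_unique[OF SL_term_0_sums] by (simp add: SL_series_def SL_numerator_0)
next
  case (Suc n)
  define Q where "Q = Qop s T"
  have "bpow Q n o\<^sub>L T = T o\<^sub>L bpow Q n"
    unfolding Q_def by (rule bpow_commute[OF Qop_commute[symmetric], symmetric])
  then have QT: "bpow Q n o\<^sub>L (T o\<^sub>L X) = T o\<^sub>L (bpow Q n o\<^sub>L X)" for X
    by (simp flip: blinfun_compose_assoc)
  have "Q o\<^sub>L SL_series ql (Suc n) s T
      = (SL_series ql n s T o\<^sub>L lmul ql (cnj_quat s)) - (T o\<^sub>L SL_series ql n s T)"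
  proof -
    have "(T o\<^sub>L SL_series ql (Suc n) s T) - (SL_series ql (Suc n) s T o\<^sub>L lmul ql s)
        = - SL_series ql n s T"
      using SL_series_Suc[OF assms(1) summable, of n] by (simp add: algebra_simps)
    then show ?thesis
      unfolding Q_def Qop_compose by (simp add: blinfun_compose_simps)
  qed
  then have "bpow Q (Suc n) o\<^sub>L SL_series ql (Suc n) s T
      = (bpow Q n o\<^sub>L SL_series ql n s T o\<^sub>L lmul ql (cnj_quat s))
        - (T o\<^sub>L (bpow Q n o\<^sub>L SL_series ql n s T))"
    by (simp add: bpow_Suc_right blinfun_compose_assoc blinfun_compose_simps QT)
  then show ?case
    using Suc by (simp add: Q_def SL_numerator_Suc)
qed

lemma SL_neg_eq_SL_series:
  assumes "s \<noteq> 0" "\<And>k. summable (SL_term ql (Suc k) s T)" "two_sided_inverse (Qop s T) W"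
  shows "SL_neg ql n s T = SL_series ql n s T"
proof -
  have "SL_neg ql n s T = bpow W n o\<^sub>L (bpow (Qop s T) n o\<^sub>L SL_series ql n s T)"
    unfolding Qop_power_compose_SL_series[OF assms(1,2)]
    by (simp add: SL_neg_def SL_numerator_def binv_eqI[OF assms(3)])
  also have "\<dots> = SL_series ql n s T"
    using two_sided_inverse_bpow[OF assms(3), of n]
    by (simp add: two_sided_inverse_def flip: blinfun_compose_assoc)
  finally show ?thesis .
qed

lemma SL_term_sums_SL_neg:
  assumes T: "right_linear qr T" and nontrivial: "\<exists>v::'a. v \<noteq> 0"
    and s: "S_radius qr T < norm s" and n: "0 < n"
  shows "SL_term ql n s T sums SL_neg ql n s T"
proof -
  obtain r M where decay: "1 < r * norm s" "\<And>k. r ^ k * norm (bpow T k) \<le> M"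
    using power_norm_bounded_beyond_S_radius[OF T nontrivial s] by blast
  then have "s \<noteq> 0"
    by auto
  have summable: "summable (SL_term ql k s T)" if "0 < k" for k
    using summable_SL_term[OF decay that] .
  obtain W where "two_sided_inverse (Qop s T) W"
    using S_resolvent_if_S_radius_less[OF T s] T by (auto simp: S_resolvent_iff invertible_blinfun_def)
  then have "SL_neg ql n s T = SL_series ql n s T"
    using SL_neg_eq_SL_series \<open>s \<noteq> 0\<close> summable by blast
  with summable[OF n] show ?thesis
    by (simp add: SL_series_def summable_sums)
qed

end

theorem lemma3p6:
  fixes ql :: "quat \<Rightarrow> 'a::banach \<Rightarrow> 'a" and qr :: "'a \<Rightarrow> quat \<Rightarrow> 'a"
    and T :: "'a \<Rightarrow>\<^sub>L 'a" and n :: nat and s :: quat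
  assumes "two_sided_qbanach ql qr"
    and "right_linear qr T"
    and "n > 0"
    and "norm s > S_radius qr T"
  shows "(\<lambda>m. real ((m + n - 1) choose (n - 1)) *\<^sub>R (bpow T m o\<^sub>L lmul ql (inverse s ^ (m + n))))
           sums SL_neg ql n s T"
proof (cases "\<exists>v::'a. v \<noteq> 0")
  case True
  interpret quaternionic_bimodule ql qr
    by (rule quaternionic_bimodule.intro) (fact assms(1))
  have "SL_term ql n s T
      = (\<lambda>m. real ((m + n - 1) choose (n - 1)) *\<^sub>R (bpow T m o\<^sub>L lmul ql (inverse s ^ (m + n))))"
    using assms(3) by (simp add: fun_eq_iff SL_term_def multichoose_eq_binomial)
  with SL_term_sums_SL_neg[OF assms(2) True assms(4,3)] show ?thesis
    by simp
next
  case False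
  then show ?thesis
    by (intro sums_zero_space) auto
qed

end
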